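(* Let $\beta>2\alpha>0$ with $\beta+2\alpha>1$, let $\varphi_N(x)=\frac12x^TAx-\sum_{k=1}^{s_N}\log\cosh(x^TAe_k)$ for $x\in\mathbb{R}^{s_N}$, and let $x$ be a minimizer of $\varphi_N$. Then $x_k\ge0$ for some $k\in\{1,\dots,s_N\}$ if and only if $x_k\ge0$ for all $k\in\{1,\dots,s_N\}$.
   Context: $A$ is the $s_N\times s_N$ symmetric circulant matrix $A=\beta I+\alpha(P+P^T)$, where $P$ is the cyclic shift matrix (so $A_{kk}=\beta$, $A_{k,k\pm1}=\alpha$ with indices mod $s_N$); $e_k$ are the standard basis vectors of $\mathbb{R}^{s_N}$. *)

theory Defs
  imports Complex_Main
begin

text \<open>The s x s symmetric circulant matrix A = beta I + alpha (P + P^T), P the cyclic shift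
  (P i j = 1 iff j = (i+1) mod s), indices 0..s-1.\<close>
definition circA :: "nat \<Rightarrow> real \<Rightarrow> real \<Rightarrow> nat \<Rightarrow> nat \<Rightarrow> real" where
  "circA s \<alpha> \<beta> i j =
     (if i = j then \<beta> else 0)
     + (if j = (i + 1) mod s then \<alpha> else 0)
     + (if i = (j + 1) mod s then \<alpha> else 0)"

text \<open>phi_N(x) = 1/2 x^T A x - sum_k log cosh (x^T A e_k); vectors in R^s are functions
  nat => real of which only the components below s matter.\<close>
definition phiN :: "nat \<Rightarrow> real \<Rightarrow> real \<Rightarrow> (nat \<Rightarrow> real) \<Rightarrow> real" where
  "phiN s \<alpha> \<beta> x =
     (1/2) * (\<Sum>i<s. \<Sum>j<s. x i * circA s \<alpha> \<beta> i j * x j)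
     - (\<Sum>k<s. ln (cosh (\<Sum>i<s. x i * circA s \<alpha> \<beta> i k)))"

end

theory Submission
  imports Defs "HOL-Analysis.Derivative"
begin

(*
  With w = x\<^sup>T A and d = x - tanh w, completing the square gives
  phi(x) = -G(w) + d\<^sup>T A d / 2, where G(w) = (tanh w)\<^sup>T A (tanh w) / 2 - \<Sum>\<^sub>k (w\<^sub>k tanh w\<^sub>k - ln cosh w\<^sub>k).
  Convexity of ln \<circ> cosh gives phi(tanh w) \<le> -G(w), and G(w) \<le> G(\<bar>w\<bar>) since A has nonnegative
  entries.  For a minimizer x, comparing with tanh \<bar>w\<bar> and using that A is positive definite
  (\<beta> > 2\<alpha>) yields d = 0, i.e. x = tanh (x\<^sup>T A), and shows that \<bar>x\<bar> is a minimizer as well.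
  If x\<^sub>k \<ge> 0, the fixed-point equations of x and \<bar>x\<bar> at k give (\<bar>x\<bar> - x)\<^sup>T A e\<^sub>k = 0, a sum of
  nonnegative terms containing \<alpha> (\<bar>x\<^sub>k\<^sub>+\<^sub>1\<bar> - x\<^sub>k\<^sub>+\<^sub>1); so the sign propagates around the cycle.
*)

lemma has_real_derivative_ln_cosh: "((\<lambda>v. ln (cosh v)) has_real_derivative tanh v) (at v)"
  by (auto intro!: derivative_eq_intros simp: tanh_def)

lemma convex_on_ln_cosh: "convex_on UNIV (\<lambda>v::real. ln (cosh v))"
  by (rule convex_on_realI[where f' = tanh])
     (auto intro: has_real_derivative_ln_cosh strict_mono_less_eq[OF tanh_real_strict_mono, THEN iffD2])

lemma ln_cosh_above_tangent: "ln (cosh v) + tanh v * (u - v) \<le> ln (cosh (u::real))"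
  using convex_on_imp_above_tangent[OF convex_on_ln_cosh, of v u "tanh v"] has_real_derivative_ln_cosh[of v]
  by auto

lemma mult_tanh_minus_ln_cosh_abs: "\<bar>v\<bar> * tanh \<bar>v\<bar> - ln (cosh \<bar>v\<bar>) = v * tanh v - ln (cosh (v::real))"
  by (cases "v \<ge> 0") auto

definition bilin :: "nat \<Rightarrow> (nat \<Rightarrow> nat \<Rightarrow> real) \<Rightarrow> (nat \<Rightarrow> real) \<Rightarrow> (nat \<Rightarrow> real) \<Rightarrow> real" where
  "bilin s M u v = (\<Sum>i<s. \<Sum>j<s. u i * M i j * v j)"

definition vecmat :: "nat \<Rightarrow> (nat \<Rightarrow> nat \<Rightarrow> real) \<Rightarrow> (nat \<Rightarrow> real) \<Rightarrow> nat \<Rightarrow> real" where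
  "vecmat s M u k = (\<Sum>i<s. u i * M i k)"

definition energy :: "nat \<Rightarrow> (nat \<Rightarrow> nat \<Rightarrow> real) \<Rightarrow> (nat \<Rightarrow> real) \<Rightarrow> real" where
  "energy s M x = (1/2) * bilin s M x x - (\<Sum>k<s. ln (cosh (vecmat s M x k)))"

text \<open>The summand \<open>v * tanh v - ln (cosh v)\<close> is the Legendre transform of \<open>ln \<circ> cosh\<close>
  evaluated at \<open>tanh v\<close>.\<close>
definition dual_energy :: "nat \<Rightarrow> (nat \<Rightarrow> nat \<Rightarrow> real) \<Rightarrow> (nat \<Rightarrow> real) \<Rightarrow> real" where
  "dual_energy s M w =
     (1/2) * bilin s M (\<lambda>k. tanh (w k)) (\<lambda>k. tanh (w k)) - (\<Sum>k<s. w k * tanh (w k) - ln (cosh (w k)))"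

lemma phiN_eq_energy: "phiN s \<alpha> \<beta> = energy s (circA s \<alpha> \<beta>)"
  by (simp add: fun_eq_iff phiN_def energy_def bilin_def vecmat_def)

lemma bilin_commute:
  assumes "\<And>i j. M i j = M j i"
  shows "bilin s M u v = bilin s M v u"
  unfolding bilin_def
  by (subst sum.swap) (simp add: assms mult.commute mult.left_commute)

lemma bilin_eq_sum_vecmat: "bilin s M u v = (\<Sum>k<s. v k * vecmat s M u k)"
  unfolding bilin_def vecmat_def
  by (subst sum.swap) (simp add: sum_distrib_left mult.commute mult.left_commute)

lemma bilin_diff_self:
  assumes "\<And>i j. M i j = M j i"
  shows "bilin s M (\<lambda>i. u i - v i) (\<lambda>i. u i - v i) = bilin s M u u - 2 * bilin s M u v + bilin s M v v"
proof -
  have "bilin s M (\<lambda>i. u i - v i) (\<lambda>i. u i - v i) = bilin s M u u - bilin s M u v - bilin s M v u + bilin s M v v"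
    unfolding bilin_def by (simp add: algebra_simps sum_subtractf sum.distrib)
  then show ?thesis
    using bilin_commute[where M = M and u = v and v = u, OF assms] by simp
qed

lemma bilin_cong:
  assumes "\<And>k. k < s \<Longrightarrow> u k = u' k" "\<And>k. k < s \<Longrightarrow> v k = v' k"
  shows "bilin s M u v = bilin s M u' v'"
  unfolding bilin_def using assms by (intro sum.cong) auto

lemma vecmat_cong:
  assumes "\<And>k. k < s \<Longrightarrow> u k = u' k"
  shows "vecmat s M u = vecmat s M u'"
  unfolding vecmat_def fun_eq_iff using assms by (intro allI sum.cong) auto

lemma energy_cong:
  assumes "\<And>k. k < s \<Longrightarrow> u k = v k"
  shows "energy s M u = energy s M v"
  unfolding energy_def using bilin_cong[OF assms assms] vecmat_cong[OF assms] by simp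

lemma energy_eq_dual_energy:
  fixes s :: nat and M :: "nat \<Rightarrow> nat \<Rightarrow> real" and z :: "nat \<Rightarrow> real"
  assumes "\<And>i j. M i j = M j i"
  defines "w \<equiv> vecmat s M z"
  shows "energy s M z = - dual_energy s M w
           + (1/2) * bilin s M (\<lambda>i. z i - tanh (w i)) (\<lambda>i. z i - tanh (w i))"
proof -
  define t where "t = (\<lambda>k. tanh (w k))"
  have "(\<Sum>k<s. ln (cosh (w k))) = (\<Sum>k<s. t k * w k) - (\<Sum>k<s. w k * tanh (w k) - ln (cosh (w k)))"
    by (simp add: t_def sum_subtractf mult.commute)
  also have "(\<Sum>k<s. t k * w k) = bilin s M z t"
    by (simp add: bilin_eq_sum_vecmat w_def)
  finally show ?thesis
    unfolding energy_def dual_energy_def bilin_diff_self[where M = M, OF assms(1)] t_def[symmetric] w_def[symmetric]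
    by (simp add: algebra_simps)
qed

lemma energy_tanh_le_dual_energy: "energy s M (\<lambda>k. tanh (w k)) \<le> - dual_energy s M w"
proof -
  define t where "t = (\<lambda>k. tanh (w k))"
  have "(\<Sum>k<s. ln (cosh (w k)) + tanh (w k) * (vecmat s M t k - w k)) \<le> (\<Sum>k<s. ln (cosh (vecmat s M t k)))"
    by (intro sum_mono ln_cosh_above_tangent)
  moreover have "(\<Sum>k<s. ln (cosh (w k)) + tanh (w k) * (vecmat s M t k - w k))
      = bilin s M t t - (\<Sum>k<s. w k * tanh (w k) - ln (cosh (w k)))"
    by (simp add: bilin_eq_sum_vecmat t_def sum_subtractf[symmetric] algebra_simps)
  ultimately show ?thesis
    unfolding energy_def dual_energy_def t_def[symmetric] by simp
qed

lemma dual_energy_le_abs: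
  assumes "\<And>i j. 0 \<le> M i j"
  shows "dual_energy s M w \<le> dual_energy s M (\<lambda>k. \<bar>w k\<bar>)"
proof -
  have "bilin s M (\<lambda>k. tanh (w k)) (\<lambda>k. tanh (w k)) \<le> bilin s M (\<lambda>k. tanh \<bar>w k\<bar>) (\<lambda>k. tanh \<bar>w k\<bar>)"
    unfolding bilin_def
  proof (intro sum_mono)
    fix i j
    have "tanh (w i) * M i j * tanh (w j) \<le> \<bar>tanh (w i) * M i j * tanh (w j)\<bar>"
      by simp
    also have "\<dots> = tanh \<bar>w i\<bar> * M i j * tanh \<bar>w j\<bar>"
      using assms[of i j] by (simp add: abs_mult)
    finally show "tanh (w i) * M i j * tanh (w j) \<le> tanh \<bar>w i\<bar> * M i j * tanh \<bar>w j\<bar>" .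
  qed
  then show ?thesis
    unfolding dual_energy_def mult_tanh_minus_ln_cosh_abs by simp
qed

lemma energy_tanh_abs_le:
  fixes s :: nat and M :: "nat \<Rightarrow> nat \<Rightarrow> real" and z :: "nat \<Rightarrow> real"
  assumes "\<And>i j. M i j = M j i" "\<And>i j. 0 \<le> M i j"
  defines "w \<equiv> vecmat s M z"
  shows "energy s M (\<lambda>k. tanh \<bar>w k\<bar>) + (1/2) * bilin s M (\<lambda>i. z i - tanh (w i)) (\<lambda>i. z i - tanh (w i))
           \<le> energy s M z"
  using energy_eq_dual_energy[where M = M and s = s and z = z, OF assms(1)]
    energy_tanh_le_dual_energy[where s = s and M = M and w = "\<lambda>k. \<bar>w k\<bar>"]
    dual_energy_le_abs[where M = M and s = s and w = w, OF assms(2)]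
  unfolding w_def by linarith

locale nonneg_pos_def_matrix =
  fixes s :: nat and M :: "nat \<Rightarrow> nat \<Rightarrow> real"
  assumes symmetric: "M i j = M j i"
    and nonneg: "0 \<le> M i j"
    and pos_def: "(\<exists>i<s. u i \<noteq> 0) \<Longrightarrow> 0 < bilin s M u u"
begin

lemma bilin_self_nonneg: "0 \<le> bilin s M u u"
proof (cases "\<exists>i<s. u i \<noteq> 0")
  case False
  then have "bilin s M u u = bilin s M (\<lambda>_. 0) (\<lambda>_. 0)"
    by (intro bilin_cong) auto
  then show ?thesis by (simp add: bilin_def)
qed (use pos_def in force)

lemma minimizer_eq_tanh:
  assumes minimizer: "\<forall>y. energy s M z \<le> energy s M y" and "k < s"
  shows "z k = tanh (vecmat s M z k)"
proof -
  define w where "w = vecmat s M z"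
  define d where "d = (\<lambda>i. z i - tanh (w i))"
  have "energy s M (\<lambda>k. tanh \<bar>w k\<bar>) + (1/2) * bilin s M d d \<le> energy s M z"
    unfolding w_def d_def by (rule energy_tanh_abs_le[where M = M, OF symmetric nonneg])
  moreover have "energy s M z \<le> energy s M (\<lambda>k. tanh \<bar>w k\<bar>)"
    using minimizer by blast
  ultimately have "\<not> 0 < bilin s M d d"
    by linarith
  with pos_def have "d k = 0"
    using \<open>k < s\<close> by blast
  then show ?thesis
    by (simp add: d_def w_def)
qed

lemma minimizer_abs:
  assumes minimizer: "\<forall>y. energy s M z \<le> energy s M y"
  shows "\<forall>y. energy s M (\<lambda>k. \<bar>z k\<bar>) \<le> energy s M y"
proof
  fix y
  define w where "w = vecmat s M z"
  have "\<bar>z k\<bar> = tanh \<bar>w k\<bar>" if "k < s" for k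
    using minimizer_eq_tanh[OF minimizer that] unfolding w_def
    by (cases "0 \<le> w k") auto
  then have "energy s M (\<lambda>k. \<bar>z k\<bar>) = energy s M (\<lambda>k. tanh \<bar>w k\<bar>)"
    by (rule energy_cong)
  also have "\<dots> \<le> energy s M z"
    using energy_tanh_abs_le[where M = M and s = s and z = z, OF symmetric nonneg]
      bilin_self_nonneg[where u = "\<lambda>i. z i - tanh (w i)"]
    unfolding w_def by linarith
  also have "\<dots> \<le> energy s M y"
    using minimizer by blast
  finally show "energy s M (\<lambda>k. \<bar>z k\<bar>) \<le> energy s M y" .
qed

lemma minimizer_nonneg_spreads:
  assumes minimizer: "\<forall>y. energy s M z \<le> energy s M y"
    and "j < s" "k < s" "0 < M j k" "0 \<le> z k"
  shows "0 \<le> z j"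
proof -
  have "tanh (vecmat s M (\<lambda>i. \<bar>z i\<bar>) k) = tanh (vecmat s M z k)"
    using minimizer_eq_tanh[OF minimizer_abs[OF minimizer] \<open>k < s\<close>]
      minimizer_eq_tanh[OF minimizer \<open>k < s\<close>] \<open>0 \<le> z k\<close> by simp
  then have "0 = vecmat s M (\<lambda>i. \<bar>z i\<bar>) k - vecmat s M z k"
    by (simp add: strict_mono_eq[OF tanh_real_strict_mono])
  also have "\<dots> = (\<Sum>i<s. (\<bar>z i\<bar> - z i) * M i k)"
    unfolding vecmat_def by (simp add: sum_subtractf left_diff_distrib)
  also have "\<dots> \<ge> (\<bar>z j\<bar> - z j) * M j k"
    using \<open>j < s\<close> nonneg by (intro member_le_sum) auto
  finally have "\<bar>z j\<bar> - z j \<le> 0"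
    using \<open>0 < M j k\<close> by (simp add: mult_le_0_iff)
  then show ?thesis by simp
qed

end

lemma sum_mod_succ:
  fixes f :: "nat \<Rightarrow> real"
  shows "(\<Sum>i<s. f ((i + 1) mod s)) = (\<Sum>i<s. f i)"
proof (cases s)
  case (Suc n)
  have "(\<Sum>i<Suc n. f ((i + 1) mod Suc n)) = (\<Sum>i<n. f ((i + 1) mod Suc n)) + f 0"
    by (simp add: sum.lessThan_Suc)
  also have "(\<Sum>i<n. f ((i + 1) mod Suc n)) = (\<Sum>i<n. f (Suc i))"
    by (intro sum.cong) auto
  also have "(\<Sum>i<n. f (Suc i)) + f 0 = (\<Sum>i<Suc n. f i)"
    by (subst sum.lessThan_Suc_shift) simp
  finally show ?thesis using Suc by simp
qed simp

lemma bilin_circA_self: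
  "bilin s (circA s \<alpha> \<beta>) u u = \<beta> * (\<Sum>i<s. u i ^ 2) + 2 * \<alpha> * (\<Sum>i<s. u i * u ((i + 1) mod s))"
proof -
  have "u i * circA s \<alpha> \<beta> i j * u j =
      (if j = i then \<beta> * (u i * u j) else 0) + (if j = (i + 1) mod s then \<alpha> * (u i * u j) else 0)
      + (if i = (j + 1) mod s then \<alpha> * (u i * u j) else 0)" for i j
    unfolding circA_def by (simp add: algebra_simps)
  then have "bilin s (circA s \<alpha> \<beta>) u u =
      (\<Sum>i<s. \<Sum>j<s. if j = i then \<beta> * (u i * u j) else 0)
      + (\<Sum>i<s. \<Sum>j<s. if j = (i + 1) mod s then \<alpha> * (u i * u j) else 0)
      + (\<Sum>j<s. \<Sum>i<s. if i = (j + 1) mod s then \<alpha> * (u i * u j) else 0)"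
    unfolding bilin_def by (subst (3) sum.swap) (simp add: sum.distrib)
  also have "\<dots> = (\<Sum>i<s. \<beta> * u i ^ 2) + (\<Sum>i<s. \<alpha> * (u i * u ((i + 1) mod s)))
      + (\<Sum>j<s. \<alpha> * (u ((j + 1) mod s) * u j))"
    by (intro arg_cong2[where f = "(+)"] sum.cong) (auto simp: power2_eq_square)
  finally show ?thesis
    by (simp add: sum_distrib_left mult.commute sum.distrib algebra_simps)
qed

lemma bilin_circA_self_ge:
  assumes "0 \<le> \<alpha>"
  shows "(\<beta> - 2 * \<alpha>) * (\<Sum>i<s. u i ^ 2) \<le> bilin s (circA s \<alpha> \<beta>) u u"
proof -
  have "0 \<le> (\<Sum>i<s. (u i + u ((i + 1) mod s))\<^sup>2)"
    by (simp add: sum_nonneg)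
  also have "\<dots> = (\<Sum>i<s. u i ^ 2) + (\<Sum>i<s. u ((i + 1) mod s) ^ 2) + 2 * (\<Sum>i<s. u i * u ((i + 1) mod s))"
    by (simp add: power2_sum sum.distrib sum_distrib_left mult.assoc)
  also have "\<dots> = 2 * (\<Sum>i<s. u i ^ 2) + 2 * (\<Sum>i<s. u i * u ((i + 1) mod s))"
    using sum_mod_succ[of "\<lambda>i. u i ^ 2" s] by simp
  finally have "0 \<le> 2 * (\<Sum>i<s. u i ^ 2) + 2 * (\<Sum>i<s. u i * u ((i + 1) mod s))" .
  with assms have "0 \<le> \<alpha> * (2 * (\<Sum>i<s. u i ^ 2) + 2 * (\<Sum>i<s. u i * u ((i + 1) mod s)))"
    by simp
  then show ?thesis
    unfolding bilin_circA_self by (simp add: algebra_simps)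
qed

lemma nonneg_pos_def_matrix_circA:
  assumes "0 \<le> \<alpha>" "2 * \<alpha> < \<beta>"
  shows "nonneg_pos_def_matrix s (circA s \<alpha> \<beta>)"
proof
  show "circA s \<alpha> \<beta> i j = circA s \<alpha> \<beta> j i" for i j
    unfolding circA_def by auto
  show "0 \<le> circA s \<alpha> \<beta> i j" for i j
    using assms unfolding circA_def by auto
  show "0 < bilin s (circA s \<alpha> \<beta>) u u" if "\<exists>i<s. u i \<noteq> 0" for u
  proof -
    from that have "0 < (\<Sum>i<s. u i ^ 2)"
      by (auto intro: sum_pos2)
    with assms have "0 < (\<beta> - 2 * \<alpha>) * (\<Sum>i<s. u i ^ 2)"
      by simp
    then show ?thesis
      using bilin_circA_self_ge[OF assms(1)] by (rule less_le_trans)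
  qed
qed

lemma all_mod_succ_closed:
  fixes s :: nat
  assumes step: "\<And>k. k < s \<Longrightarrow> P k \<Longrightarrow> P ((k + 1) mod s)"
    and "k0 < s" "P k0" "j < s"
  shows "P j"
proof -
  have "P ((k0 + n) mod s)" for n
  proof (induction n)
    case (Suc n)
    then have "P (((k0 + n) mod s + 1) mod s)"
      using step \<open>k0 < s\<close> by simp
    then show ?case by (simp add: mod_Suc_eq)
  qed (use \<open>k0 < s\<close> \<open>P k0\<close> in simp)
  from this[of "s + j - k0"] show ?thesis
    using \<open>k0 < s\<close> \<open>j < s\<close> by simp
qed

theorem lemma4p4:
  fixes s :: nat and \<alpha> \<beta> :: real and x :: "nat \<Rightarrow> real"
  assumes "s \<ge> 1"
    and "\<beta> > 2 * \<alpha>" and "2 * \<alpha> > 0" and "\<beta> + 2 * \<alpha> > 1"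
    and "\<forall>y. phiN s \<alpha> \<beta> x \<le> phiN s \<alpha> \<beta> y"
  shows "(\<exists>k<s. x k \<ge> 0) \<longleftrightarrow> (\<forall>k<s. x k \<ge> 0)"
proof -
  \<comment> \<open>\<open>\<beta> + 2 * \<alpha> > 1\<close> only excludes the zero minimizer.\<close>
  interpret nonneg_pos_def_matrix s "circA s \<alpha> \<beta>"
    using assms(2,3) by (intro nonneg_pos_def_matrix_circA) auto
  have minimizer: "\<forall>y. energy s (circA s \<alpha> \<beta>) x \<le> energy s (circA s \<alpha> \<beta>) y"
    using assms(5) by (simp add: phiN_eq_energy)
  have succ: "0 \<le> x ((k + 1) mod s)" if "k < s" "0 \<le> x k" for k
  proof (rule minimizer_nonneg_spreads[OF minimizer])
    show "(k + 1) mod s < s" "k < s" "0 \<le> x k" using that by simp_all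
    show "0 < circA s \<alpha> \<beta> ((k + 1) mod s) k"
      using assms(2,3) unfolding circA_def by auto
  qed
  show ?thesis
  proof
    assume "\<exists>k<s. 0 \<le> x k"
    then show "\<forall>k<s. 0 \<le> x k"
      using all_mod_succ_closed[of s "\<lambda>k. 0 \<le> x k"] succ by blast
  next
    assume "\<forall>k<s. 0 \<le> x k"
    then show "\<exists>k<s. 0 \<le> x k"
      using assms(1) by (intro exI[of _ 0]) auto
  qed
qed

end
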